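(* For $f,g\in\mathbb Z^{m+\infty}_+$, $f\ge g$ in the Bruhat ordering if and only if $f^\natural\succcurlyeq g^\natural$ in the super Bruhat ordering.
   Context: $I(m|\infty)=\{-m,\dots,-1\}\cup\{1,2,\dots\}$. $\mathbb Z^{m+\infty}_+$ is the set of $f:I(m|\infty)\to\mathbb Z$ with $f(-m)>\cdots>f(-1)$, $f(1)>f(2)>\cdots$, $f(i)=1-i$ for $i\gg0$; $\mathbb Z^{m|\infty}_+$ the set with $f(-m)>\cdots>f(-1)$, $f(1)<f(2)<\cdots$, $f(i)=i$ for $i\gg0$. For $f\in\mathbb Z^{m+\infty}_+$, $f^\natural\in\mathbb Z^{m|\infty}_+$ has $f^\natural(i)=f(i)$ for $i<0$, and $(f^\natural(1)<f^\natural(2)<\cdots)$ is the increasing enumeration of $\mathbb Z\setminus\{f(1),f(2),\dots\}$. Bruhat ordering: transitive closure of $f<f\cdot\tau_{ij}$ for $i<j$ in $I(m|\infty)$ with $f(i)<f(j)$, where $\tau_{ij}$ is the transposition and $(f\cdot\tau)(k)=f(\tau(k))$. Super Bruhat ordering: with $d_i:j\mapsto-\mathrm{sgn}(i)\delta_{ij}$, write $f\downarrow g$ if $g=f-d_i+d_j$ for some $i<0<j$ with $f(i)=f(j)$, or $g=f\cdot\tau_{ij}$ for some $i<j<0$ with $f(i)>f(j)$, or $g=f\cdot\tau_{ij}$ for some $0<i<j$ with $f(i)<f(j)$; $f\succ g$ means there is a chain $f=h_1\downarrow h_2\downarrow\cdots\downarrow h_r=g$, and $\succcurlyeq$ means $\succ$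 or $=$. *)

theory Defs
  imports Main
begin

text \<open>Functions on I(m|infinity) are represented as int => int, with value 0
  outside the index set I(m|infinity) (a normalisation convention).\<close>

definition idx :: "nat \<Rightarrow> int set" where
  "idx m = {i. (- int m \<le> i \<and> i \<le> -1) \<or> 1 \<le> i}"

definition Zplus :: "nat \<Rightarrow> (int \<Rightarrow> int) set" where
  "Zplus m = {f. (\<forall>k. k \<notin> idx m \<longrightarrow> f k = 0) \<and> (\<exists>N. \<forall>i\<ge>N. f i = 1 - i)}"

definition Zplus_dom :: "nat \<Rightarrow> (int \<Rightarrow> int) set" where
  "Zplus_dom m = {f \<in> Zplus m.
      (\<forall>i j. - int m \<le> i \<and> i < j \<and> j \<le> -1 \<longrightarrow> f i > f j) \<and>
      (\<forall>i j. 1 \<le> i \<and> i < j \<longrightarrow> f i > f j)}"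

definition Zsuper :: "nat \<Rightarrow> (int \<Rightarrow> int) set" where
  "Zsuper m = {f. (\<forall>k. k \<notin> idx m \<longrightarrow> f k = 0) \<and> (\<exists>N. \<forall>i\<ge>N. f i = i)}"

definition Zsuper_dom :: "nat \<Rightarrow> (int \<Rightarrow> int) set" where
  "Zsuper_dom m = {f \<in> Zsuper m.
      (\<forall>i j. - int m \<le> i \<and> i < j \<and> j \<le> -1 \<longrightarrow> f i > f j) \<and>
      (\<forall>i j. 1 \<le> i \<and> i < j \<longrightarrow> f i < f j)}"

definition tact :: "(int \<Rightarrow> int) \<Rightarrow> int \<Rightarrow> int \<Rightarrow> (int \<Rightarrow> int)" where
  "tact f i j = (\<lambda>k. f (if k = i then j else if k = j then i else k))"

text \<open>f natural: same on negative indices; on positive indices the increasing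
  enumeration (starting at index 1) of Z minus {f(1), f(2), ...}.\<close>
definition natural :: "nat \<Rightarrow> (int \<Rightarrow> int) \<Rightarrow> (int \<Rightarrow> int)" where
  "natural m f = (\<lambda>k.
     if k < 0 then f k
     else if 1 \<le> k then
       (let S = - {f i | i. 1 \<le> i} in
        THE x. x \<in> S \<and> card {y \<in> S. y < x} = nat (k - 1))
     else 0)"

definition bruhat_step :: "nat \<Rightarrow> (int \<Rightarrow> int) \<Rightarrow> (int \<Rightarrow> int) \<Rightarrow> bool" where
  "bruhat_step m f g \<longleftrightarrow> f \<in> Zplus m \<and>
     (\<exists>i j. i \<in> idx m \<and> j \<in> idx m \<and> i < j \<and> f i < f j \<and> g = tact f i j)"

definition bruhat_ge :: "nat \<Rightarrow> (int \<Rightarrow> int) \<Rightarrow> (int \<Rightarrow> int) \<Rightarrow> bool" where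
  "bruhat_ge m f g \<longleftrightarrow> g = f \<or> (bruhat_step m)\<^sup>+\<^sup>+ g f"

definition dvec :: "int \<Rightarrow> (int \<Rightarrow> int)" where
  "dvec i = (\<lambda>j. if i = j then - sgn i else 0)"

definition sdown :: "nat \<Rightarrow> (int \<Rightarrow> int) \<Rightarrow> (int \<Rightarrow> int) \<Rightarrow> bool" where
  "sdown m f g \<longleftrightarrow> f \<in> Zsuper m \<and>
     ((\<exists>i j. i \<in> idx m \<and> j \<in> idx m \<and> i < 0 \<and> 0 < j \<and> f i = f j \<and>
             g = (\<lambda>k. f k - dvec i k + dvec j k)) \<or>
      (\<exists>i j. i \<in> idx m \<and> j \<in> idx m \<and> i < j \<and> j < 0 \<and> f i > f j \<and> g = tact f i j) \<or>
      (\<exists>i j. i \<in> idx m \<and> j \<in> idx m \<and> 0 < i \<and> i < j \<and> f i < f j \<and> g = tact f i j))"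

definition super_gt :: "nat \<Rightarrow> (int \<Rightarrow> int) \<Rightarrow> (int \<Rightarrow> int) \<Rightarrow> bool" where
  "super_gt m f g \<longleftrightarrow> (sdown m)\<^sup>+\<^sup>+ f g"

definition super_ge :: "nat \<Rightarrow> (int \<Rightarrow> int) \<Rightarrow> (int \<Rightarrow> int) \<Rightarrow> bool" where
  "super_ge m f g \<longleftrightarrow> super_gt m f g \<or> f = g"

end

(*
  Both orders are described by the same two kinds of invariants of a function F on I(m|oo):
  the multiplicities of its values and, for each v, the number neg_rank of negative indices z
  with v <= F z.  A Bruhat move F < F o tau_ij permutes the values and can only bring a larger
  value to a negative index, so it keeps the multiplicities and raises neg_rank.  Conversely,
  if g has the multiplicities of f and a smaller neg_rank, then g is raised to f by moves that
  strictly decrease the potential sum z * g z: either an ascent of adjacent entries inside one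
  block is sorted, or a value u at a negative index is exchanged with a value w > u at a
  positive index, where (u, w] is a maximal run of values at which neg_rank is too small.

  A super Bruhat move keeps the super multiplicities (negative minus positive occurrences of a
  value) and lowers neg_rank.  Conversely, when these invariants of psi and phi compare in this
  way, psi <= phi pointwise and psi is reached from phi by cutting phi down one level at a
  time, each level being lowered by pairs of equal negative and positive entries.

  The map f |-> f-natural keeps the negative entries and replaces the positive values by their
  complement in Z, so the super multiplicity of v in f-natural is the multiplicity of v in f
  minus one, and neg_rank is unchanged: the invariants of f, g and of their images correspond.
*)

theory Submission
  imports Defs "HOL-Combinatorics.Transposition"
begin

lemma idx_eq: "idx m = {- int m..-1} \<union> {1..}"
  by (auto simp: idx_def)

lemma tact_eq_comp: "tact F i j = F \<circ> transpose i j"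
  by (auto simp: tact_def transpose_def)

lemma tact_apply [simp]:
  "tact F i j i = F j" "tact F i j j = F i" "k \<noteq> i \<Longrightarrow> k \<noteq> j \<Longrightarrow> tact F i j k = F k"
  by (simp_all add: tact_def)

lemma card_tact:
  assumes "i \<in> B" "j \<in> B"
  shows "card {z \<in> B. P (tact F i j z)} = card {z \<in> B. P (F z)}"
  by (rule bij_betw_same_card[of "transpose i j"])
    (use assms in \<open>auto simp: bij_betw_def tact_eq_comp inj_on_def image_iff transpose_def
                   intro: exI[of _ "transpose i j _"]\<close>)

lemma card_tact_block:
  assumes "{i, j} \<subseteq> B \<or> {i, j} \<inter> B = {}"
  shows "card {z \<in> B. P (tact F i j z)} = card {z \<in> B. P (F z)}"
proof (cases "{i, j} \<subseteq> B")
  case False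
  then have "{z \<in> B. P (tact F i j z)} = {z \<in> B. P (F z)}" using assms by (auto simp: tact_def)
  then show ?thesis by simp
qed (simp add: card_tact)

lemma inj_on_tact_block:
  assumes "inj_on F B" "{i, j} \<subseteq> B \<or> {i, j} \<inter> B = {}"
  shows "inj_on (tact F i j) B"
proof (cases "{i, j} \<subseteq> B")
  case True
  then show ?thesis using assms(1) inj_on_swap_iff[of i B j F] by (simp add: tact_eq_comp)
next
  case False
  then show ?thesis using assms by (auto simp: inj_on_def tact_def)
qed

lemma beyond_finite_set:
  fixes D :: "int set"
  assumes "finite D"
  obtains N where "\<And>k. N \<le> k \<Longrightarrow> k \<notin> D"
proof -
  obtain b where "\<forall>x\<in>D. x \<le> b" using bdd_above_finite[OF assms] by (auto simp: bdd_above_def)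
  then have "b + 1 \<le> k \<Longrightarrow> k \<notin> D" for k by force
  then show ?thesis using that by blast
qed

lemma Zplus_local_change:
  assumes "F \<in> Zplus m" "finite D" "D \<subseteq> idx m" "\<And>z. z \<notin> D \<Longrightarrow> G z = F z"
  shows "G \<in> Zplus m"
proof -
  obtain N where N: "\<forall>k\<ge>N. F k = 1 - k" using assms(1) by (auto simp: Zplus_def)
  obtain N' where N': "\<And>k. N' \<le> k \<Longrightarrow> k \<notin> D" using beyond_finite_set[OF assms(2)] by blast
  have "\<forall>k\<ge>max N N'. G k = 1 - k" using N N' assms(4) by simp
  moreover have "\<forall>k. k \<notin> idx m \<longrightarrow> G k = 0" using assms(1,3,4) by (force simp: Zplus_def)
  ultimately show ?thesis unfolding Zplus_def by blast
qed

lemma Zsuper_local_change: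
  assumes "F \<in> Zsuper m" "finite D" "D \<subseteq> idx m" "\<And>z. z \<notin> D \<Longrightarrow> G z = F z"
  shows "G \<in> Zsuper m"
proof -
  obtain N where N: "\<forall>k\<ge>N. F k = k" using assms(1) by (auto simp: Zsuper_def)
  obtain N' where N': "\<And>k. N' \<le> k \<Longrightarrow> k \<notin> D" using beyond_finite_set[OF assms(2)] by blast
  have "\<forall>k\<ge>max N N'. G k = k" using N N' assms(4) by simp
  moreover have "\<forall>k. k \<notin> idx m \<longrightarrow> G k = 0" using assms(1,3,4) by (force simp: Zsuper_def)
  ultimately show ?thesis unfolding Zsuper_def by blast
qed

lemma finite_Zplus_ge:
  assumes "F \<in> Zplus m"
  shows "finite {z \<in> {1..}. v \<le> F z}"
proof -
  obtain N where "\<forall>k\<ge>N. F k = 1 - k" using assms by (auto simp: Zplus_def)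
  then have "z \<le> max N (1 - v)" if "v \<le> F z" for z
    using that by (cases "N \<le> z") auto
  then have "{z \<in> {1..}. v \<le> F z} \<subseteq> {1..max N (1 - v)}" by auto
  then show ?thesis by (rule finite_subset) simp
qed

lemma finite_Zsuper_less:
  assumes "F \<in> Zsuper m"
  shows "finite {z \<in> {1..}. F z < v}"
proof -
  obtain N where "\<forall>k\<ge>N. F k = k" using assms by (auto simp: Zsuper_def)
  then have "z \<le> max N v" if "F z < v" for z
    using that by (cases "N \<le> z") auto
  then have "{z \<in> {1..}. F z < v} \<subseteq> {1..max N v}" by auto
  then show ?thesis by (rule finite_subset) simp
qed

lemma finite_neg_block: "finite {z \<in> {- int m..-1}. P z}"
  by (rule finite_subset[of _ "{- int m..-1}"]) auto

lemma Zplus_dom_iff: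
  "f \<in> Zplus_dom m \<longleftrightarrow>
     f \<in> Zplus m \<and> strict_antimono_on {- int m..-1} f \<and> strict_antimono_on {1..} f"
  by (auto simp: Zplus_dom_def monotone_on_def)

lemma Zsuper_dom_iff:
  "\<phi> \<in> Zsuper_dom m \<longleftrightarrow>
     \<phi> \<in> Zsuper m \<and> strict_antimono_on {- int m..-1} \<phi> \<and> strict_mono_on {1..} \<phi>"
  by (auto simp: Zsuper_dom_def monotone_on_def)

lemma Zplus_dom_tail:
  assumes "f \<in> Zplus_dom m"
  obtains N where "1 \<le> N" "\<And>i. N \<le> i \<Longrightarrow> f i = 1 - i"
proof -
  obtain N where "\<forall>i\<ge>N. f i = 1 - i" using assms by (auto simp: Zplus_dom_def Zplus_def)
  then show ?thesis using that[of "max N 1"] by simp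
qed

lemma Zplus_dom_le_first:
  assumes "f \<in> Zplus_dom m" "1 \<le> i"
  shows "f i \<le> f 1"
proof -
  have dec: "strict_antimono_on {1..} f" using assms(1) by (simp add: Zplus_dom_iff)
  show ?thesis using monotone_onD[OF dec, of 1 i] assms(2) by (cases "i = 1") auto
qed

lemma Zplus_dom_neg_bounds:
  assumes "f \<in> Zplus_dom m" "z \<in> {- int m..-1}"
  shows "f (-1) \<le> f z" "f z \<le> f (- int m)"
proof -
  have dec: "strict_antimono_on {- int m..-1} f" using assms(1) by (simp add: Zplus_dom_iff)
  show "f (-1) \<le> f z" using monotone_onD[OF dec, of z "-1"] assms(2) by (cases "z = -1") auto
  show "f z \<le> f (- int m)"
    using monotone_onD[OF dec, of "- int m" z] assms(2) by (cases "z = - int m") auto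
qed

lemma Zsuper_bounded_below:
  assumes "F \<in> Zsuper m"
  obtains L where "\<And>z. L \<le> F z"
proof -
  obtain N where N: "\<forall>k\<ge>N. F k = k" and out: "\<forall>k. k \<notin> idx m \<longrightarrow> F k = 0"
    using assms by (auto simp: Zsuper_def)
  define L where "L = min 0 (Min (F ` {- int m..\<bar>N\<bar>}))"
  have "L \<le> F z" for z
  proof (cases "z \<in> {- int m..\<bar>N\<bar>}")
    case True
    then show ?thesis by (auto simp: L_def intro: min.coboundedI2)
  next
    case False
    then have "F z = 0 \<or> (N \<le> z \<and> 0 < z)" using out by (auto simp: idx_def)
    then show ?thesis using N out False by (auto simp: L_def)
  qed
  then show ?thesis by (rule that)
qed

lemma Zsuper_finite_difference:
  assumes "\<phi> \<in> Zsuper m" "\<psi> \<in> Zsuper m"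
  shows "finite {z. \<phi> z \<noteq> \<psi> z}" "{z. \<phi> z \<noteq> \<psi> z} \<subseteq> idx m"
proof -
  show sub: "{z. \<phi> z \<noteq> \<psi> z} \<subseteq> idx m" using assms by (force simp: Zsuper_def)
  obtain N1 N2 where "\<forall>k\<ge>N1. \<phi> k = k" "\<forall>k\<ge>N2. \<psi> k = k"
    using assms by (auto simp: Zsuper_def)
  then have below: "z < max N1 N2" if "\<phi> z \<noteq> \<psi> z" for z
    using that by (cases "max N1 N2 \<le> z") auto
  have "{z. \<phi> z \<noteq> \<psi> z} \<subseteq> {- int m..max N1 N2}"
  proof
    fix z assume "z \<in> {z. \<phi> z \<noteq> \<psi> z}"
    then have "z \<in> idx m" "z < max N1 N2" using sub below by auto
    then show "z \<in> {- int m..max N1 N2}" by (auto simp: idx_def)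
  qed
  then show "finite {z. \<phi> z \<noteq> \<psi> z}" by (rule finite_subset) simp
qed

section \<open>Strictly decreasing integer sequences\<close>

lemma strict_antimono_le_if_card_le:
  fixes F G :: "int \<Rightarrow> int"
  assumes B: "B \<subseteq> {a..}" "{a..y} \<subseteq> B" "y \<in> B"
    and F: "strict_antimono_on B F" and G: "strict_antimono_on B G"
    and card_le: "card {z \<in> B. F y \<le> F z} \<le> card {z \<in> B. F y \<le> G z}"
  shows "F y \<le> G y"
proof (rule ccontr)
  assume "\<not> F y \<le> G y"
  have "a \<le> y" using B(1,3) by auto
  have "{z \<in> B. F y \<le> F z} = {a..y}"
  proof (intro subset_antisym subsetI)
    fix z assume "z \<in> {a..y}"
    then show "z \<in> {z \<in> B. F y \<le> F z}"
      using B(2,3) monotone_onD[OF F, of z y] by (cases "z = y") auto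
  next
    fix z assume z: "z \<in> {z \<in> B. F y \<le> F z}"
    then have "\<not> y < z" using monotone_onD[OF F, of y z] B(3) by auto
    then show "z \<in> {a..y}" using z B(1) by auto
  qed
  then have "card {a..y} \<le> card {z \<in> B. F y \<le> G z}" using card_le by simp
  moreover have "{z \<in> B. F y \<le> G z} \<subseteq> {a..<y}"
  proof
    fix z assume z: "z \<in> {z \<in> B. F y \<le> G z}"
    have "z < y"
    proof (rule ccontr)
      assume "\<not> z < y"
      then have "G z \<le> G y" using monotone_onD[OF G, of y z] z B(3) by (cases "z = y") auto
      then show False using z \<open>\<not> F y \<le> G y\<close> by simp
    qed
    then show "z \<in> {a..<y}" using z B(1) by auto
  qed
  then have "card {z \<in> B. F y \<le> G z} \<le> card {a..<y}" by (intro card_mono) auto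
  ultimately show False using \<open>a \<le> y\<close> by simp
qed

lemma strict_antimono_eq_if_image_eq:
  fixes F G :: "int \<Rightarrow> int"
  assumes B: "B \<subseteq> {a..}" "{a..y} \<subseteq> B" "y \<in> B"
    and F: "strict_antimono_on B F" and G: "strict_antimono_on B G" and image: "F ` B = G ` B"
  shows "F y = G y"
proof -
  have upper: "card {z \<in> B. v \<le> H z} = card {x \<in> H ` B. v \<le> x}"
    if "strict_antimono_on B H" for H :: "int \<Rightarrow> int" and v
  proof -
    have "inj_on H B" using that by (simp add: strict_antimono_iff_antimono)
    then have "card (H ` {z \<in> B. v \<le> H z}) = card {z \<in> B. v \<le> H z}"
      by (intro card_image) (auto intro: inj_on_subset)
    moreover have "H ` {z \<in> B. v \<le> H z} = {x \<in> H ` B. v \<le> x}" by auto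
    ultimately show ?thesis by simp
  qed
  have "F y \<le> G y" by (rule strict_antimono_le_if_card_le[OF B F G]) (simp add: upper F G image)
  moreover have "G y \<le> F y" by (rule strict_antimono_le_if_card_le[OF B G F]) (simp add: upper F G image)
  ultimately show ?thesis by simp
qed

lemma strict_antimono_on_intervalI:
  fixes F :: "int \<Rightarrow> int"
  assumes "\<And>z. a \<le> z \<Longrightarrow> z + 1 \<le> b \<Longrightarrow> F (z + 1) < F z"
  shows "strict_antimono_on {a..b} F"
proof (rule monotone_onI)
  fix i j assume ij: "i \<in> {a..b}" "j \<in> {a..b}" "i < j"
  have "F (i + 1 + int d) < F i" if "i + 1 + int d \<le> b" for d
    using that
  proof (induction d)
    case 0 then show ?case using assms ij by simp
  next
    case (Suc d)
    then show ?case using assms[of "i + 1 + int d"] ij by simp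
  qed
  from this[of "nat (j - i - 1)"] show "F j < F i" using ij by simp
qed

section \<open>Ranks in a set of integers bounded below\<close>

lemma card_below_succ:
  fixes T :: "int set"
  assumes "T \<subseteq> {L..}"
  shows "card {y \<in> T. y < x + 1} = card {y \<in> T. y < x} + (if x \<in> T then 1 else 0)"
proof -
  have fin: "finite {y \<in> T. y < x}"
    by (rule finite_subset[of _ "{L..<x}"]) (use assms in auto)
  show ?thesis
  proof (cases "x \<in> T")
    case True
    then have "{y \<in> T. y < x + 1} = insert x {y \<in> T. y < x}" by (auto simp: le_less)
    then show ?thesis using fin True by simp
  next
    case False
    then have "{y \<in> T. y < x + 1} = {y \<in> T. y < x}" by (auto simp: le_less)
    then show ?thesis using False by simp
  qed
qed

lemma card_below_strict_mono:
  fixes T :: "int set"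
  assumes "T \<subseteq> {L..}" "x \<in> T" "x < x'"
  shows "card {y \<in> T. y < x} < card {y \<in> T. y < x'}"
proof (rule psubset_card_mono)
  show "finite {y \<in> T. y < x'}" by (rule finite_subset[of _ "{L..<x'}"]) (use assms(1) in auto)
  show "{y \<in> T. y < x} \<subset> {y \<in> T. y < x'}" using assms by auto
qed

lemma exists_card_below_eq:
  fixes T :: "int set"
  assumes below: "T \<subseteq> {L..}" and above: "{K..} \<subseteq> T"
  obtains x where "x \<in> T" "card {y \<in> T. y < x} = n"
proof -
  let ?r = "\<lambda>x. card {y \<in> T. y < x}"
  have "{y \<in> T. y < L} = {}" using below by auto
  then have r_L: "?r L = 0" by (metis card.empty)
  define M where "M = max K L"
  have "{M..M + int n} \<subseteq> {y \<in> T. y < M + int n + 1}" using above by (auto simp: M_def)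
  moreover have "finite {y \<in> T. y < M + int n + 1}"
    by (rule finite_subset[of _ "{L..<M + int n + 1}"]) (use below in auto)
  ultimately have "card {M..M + int n} \<le> ?r (M + int n + 1)" by (intro card_mono)
  then have "n + 1 \<le> ?r (M + int n + 1)" by simp
  then have "n < ?r (L + int (nat (M + int n - L)) + 1)" by (simp add: M_def)
  then have ex: "\<exists>d. n < ?r (L + int d + 1)" by blast
  define d where "d = (LEAST d. n < ?r (L + int d + 1))"
  have d_gt: "n < ?r (L + int d + 1)" unfolding d_def by (rule LeastI_ex[OF ex])
  have d_le: "?r (L + int d) \<le> n"
  proof (cases d)
    case 0 then show ?thesis using r_L by simp
  next
    case (Suc d')
    then have "\<not> n < ?r (L + int d' + 1)" using not_less_Least[of d' "\<lambda>d. n < ?r (L + int d + 1)"]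
      by (simp add: d_def)
    moreover have "L + int d = L + int d' + 1" using Suc by simp
    ultimately show ?thesis by (metis not_less)
  qed
  show ?thesis
    using that[of "L + int d"] d_gt d_le card_below_succ[OF below, of "L + int d"]
    by (auto split: if_splits)
qed

lemma ex1_card_below_eq:
  fixes T :: "int set"
  assumes below: "T \<subseteq> {L..}" and above: "{K..} \<subseteq> T"
  shows "\<exists>!x. x \<in> T \<and> card {y \<in> T. y < x} = n"
proof -
  obtain x where x: "x \<in> T" "card {y \<in> T. y < x} = n"
    using exists_card_below_eq[OF below above] by blast
  have "x' = x" if "x' \<in> T" "card {y \<in> T. y < x'} = n" for x'
    using card_below_strict_mono[OF below x(1), of x'] card_below_strict_mono[OF below that(1), of x]
      x(2) that(2) by (cases x x' rule: linorder_cases) auto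
  then show ?thesis using x by blast
qed

section \<open>The map natural\<close>

lemma natural_neg: "k < 0 \<Longrightarrow> natural m f k = f k"
  by (simp add: natural_def)

lemma natural_pos:
  "1 \<le> k \<Longrightarrow>
     natural m f k = (THE x. x \<in> - f ` {1..} \<and> card {y \<in> - f ` {1..}. y < x} = nat (k - 1))"
proof -
  have "{f i |i. 1 \<le> i} = f ` {1..}" by auto
  then show "1 \<le> k \<Longrightarrow> ?thesis" by (simp add: natural_def)
qed

lemma Zplus_dom_complement_bounds:
  assumes f: "f \<in> Zplus_dom m" and N: "1 \<le> N" "\<And>i. N \<le> i \<Longrightarrow> f i = 1 - i"
  shows "- f ` {1..} \<subseteq> {2 - N..}" "{f 1 + 1..} \<subseteq> - f ` {1..}"
proof -
  show "- f ` {1..} \<subseteq> {2 - N..}"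
  proof
    fix t assume t: "t \<in> - f ` {1..}"
    show "t \<in> {2 - N..}"
    proof (rule ccontr)
      assume "t \<notin> {2 - N..}"
      then have "1 - t \<in> {1..}" "f (1 - t) = t" using N by auto
      then show False using t by (metis ComplD image_eqI)
    qed
  qed
  show "{f 1 + 1..} \<subseteq> - f ` {1..}"
    using Zplus_dom_le_first[OF f] by fastforce
qed

lemma natural_rank:
  assumes f: "f \<in> Zplus_dom m" and k: "1 \<le> k"
  shows "natural m f k \<in> - f ` {1..} \<and> card {y \<in> - f ` {1..}. y < natural m f k} = nat (k - 1)"
proof -
  obtain N where N: "1 \<le> N" "\<And>i. N \<le> i \<Longrightarrow> f i = 1 - i" using Zplus_dom_tail[OF f] by blast
  show ?thesis unfolding natural_pos[OF k]
    by (rule theI'[OF ex1_card_below_eq[OF Zplus_dom_complement_bounds[OF f N]]])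
qed

lemma natural_eqI:
  assumes f: "f \<in> Zplus_dom m" and k: "1 \<le> k"
    and x: "x \<in> - f ` {1..}" "card {y \<in> - f ` {1..}. y < x} = nat (k - 1)"
  shows "natural m f k = x"
proof -
  obtain N where N: "1 \<le> N" "\<And>i. N \<le> i \<Longrightarrow> f i = 1 - i" using Zplus_dom_tail[OF f] by blast
  show ?thesis unfolding natural_pos[OF k]
    by (rule the1_equality[OF ex1_card_below_eq[OF Zplus_dom_complement_bounds[OF f N]]]) (use x in blast)+
qed

lemma strict_mono_natural:
  assumes f: "f \<in> Zplus_dom m"
  shows "strict_mono_on {1..} (natural m f)"
proof (rule monotone_onI, rule ccontr)
  fix k k' assume kk: "k \<in> {1..}" "k' \<in> {1..}" "k < k'" "\<not> natural m f k < natural m f k'"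
  obtain N where N: "1 \<le> N" "\<And>i. N \<le> i \<Longrightarrow> f i = 1 - i" using Zplus_dom_tail[OF f] by blast
  note rk = natural_rank[OF f, of k] natural_rank[OF f, of k']
  have "card {y \<in> - f ` {1..}. y < natural m f k'} \<le> card {y \<in> - f ` {1..}. y < natural m f k}"
  proof (cases "natural m f k = natural m f k'")
    case False
    then have "natural m f k' < natural m f k" using kk(4) by simp
    moreover have "natural m f k' \<in> - f ` {1..}" using rk kk by simp
    ultimately show ?thesis
      using card_below_strict_mono[OF Zplus_dom_complement_bounds(1)[OF f N]] by (simp add: less_imp_le)
  qed simp
  then show False using rk kk by simp
qed

lemma natural_image:
  assumes f: "f \<in> Zplus_dom m"
  shows "natural m f ` {1..} = - f ` {1..}"
proof
  show "natural m f ` {1..} \<subseteq> - f ` {1..}" using natural_rank[OF f] by auto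
  show "- f ` {1..} \<subseteq> natural m f ` {1..}"
  proof
    fix t assume t: "t \<in> - f ` {1..}"
    let ?k = "int (card {y \<in> - f ` {1..}. y < t}) + 1"
    have "natural m f ?k = t" using t by (intro natural_eqI[OF f]) auto
    then show "t \<in> natural m f ` {1..}" by (rule image_eqI[OF sym]) simp
  qed
qed

lemma card_complement_below:
  assumes f: "f \<in> Zplus_dom m" and k: "f 1 < k" "1 \<le> k"
  shows "card {y \<in> - f ` {1..}. y < k} = nat (k - 1)"
proof -
  obtain N where N: "1 \<le> N" "\<And>i. N \<le> i \<Longrightarrow> f i = 1 - i" using Zplus_dom_tail[OF f] by blast
  have dec: "strict_antimono_on {1..} f" using f by (simp add: Zplus_dom_iff)
  then have inj: "inj_on f {1..<N}"
    by (rule inj_on_subset[OF conjunct2[OF iffD1[OF strict_antimono_iff_antimono]]]) auto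
  have "f ` {1..<N} \<subseteq> {2 - N..<k}"
  proof
    fix y assume "y \<in> f ` {1..<N}"
    then obtain i where i: "1 \<le> i" "i < N" "y = f i" by auto
    have "f N < f i" using monotone_onD[OF dec, of i N] i N by simp
    then show "y \<in> {2 - N..<k}" using N i k Zplus_dom_le_first[OF f i(1)] by auto
  qed
  moreover have "{y \<in> - f ` {1..}. y < k} = {2 - N..<k} - f ` {1..<N}"
  proof (intro set_eqI iffI)
    fix y assume "y \<in> {y \<in> - f ` {1..}. y < k}"
    then show "y \<in> {2 - N..<k} - f ` {1..<N}"
      using Zplus_dom_complement_bounds(1)[OF f N] by auto
  next
    fix y assume y: "y \<in> {2 - N..<k} - f ` {1..<N}"
    have "y \<noteq> f i" if "1 \<le> i" for i
      using y that N(2)[of i] by (cases "i < N") auto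
    then show "y \<in> {y \<in> - f ` {1..}. y < k}" using y by auto
  qed
  ultimately have "card {y \<in> - f ` {1..}. y < k} = card {2 - N..<k} - card (f ` {1..<N})"
    by (simp add: card_Diff_subset)
  also have "\<dots> = nat (k - 1)" using card_image[OF inj] N k by simp
  finally show ?thesis .
qed

lemma natural_eventually_id:
  assumes f: "f \<in> Zplus_dom m"
  shows "\<forall>k\<ge>max (f 1 + 1) 1. natural m f k = k"
proof (intro allI impI)
  fix k assume "max (f 1 + 1) 1 \<le> k"
  moreover obtain N where N: "1 \<le> N" "\<And>i. N \<le> i \<Longrightarrow> f i = 1 - i"
    using Zplus_dom_tail[OF f] by blast
  ultimately show "natural m f k = k"
    using Zplus_dom_complement_bounds(2)[OF f N] card_complement_below[OF f]
    by (intro natural_eqI[OF f]) auto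
qed

lemma natural_Zsuper_dom:
  assumes f: "f \<in> Zplus_dom m"
  shows "natural m f \<in> Zsuper_dom m"
proof -
  have "natural m f k = 0" if "k \<notin> idx m" for k
  proof (cases "k < 0")
    case True
    then show ?thesis using f that by (auto simp: natural_neg Zplus_dom_def Zplus_def)
  qed (use that in \<open>auto simp: natural_def idx_def\<close>)
  then have "natural m f \<in> Zsuper m"
    using natural_eventually_id[OF f] unfolding Zsuper_def by blast
  moreover have "strict_antimono_on {- int m..-1} (natural m f)"
    using f by (auto simp: Zplus_dom_iff monotone_on_def natural_neg)
  ultimately show ?thesis using strict_mono_natural[OF f] by (simp add: Zsuper_dom_iff)
qed

section \<open>Multiplicities and negative ranks\<close>

definition val_count :: "int set \<Rightarrow> (int \<Rightarrow> int) \<Rightarrow> int \<Rightarrow> nat" where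
  "val_count B F v = card {z \<in> B. F z = v}"

definition neg_rank :: "nat \<Rightarrow> (int \<Rightarrow> int) \<Rightarrow> int \<Rightarrow> nat" where
  "neg_rank m F v = card {z \<in> {- int m..-1}. v \<le> F z}"

definition super_count :: "nat \<Rightarrow> (int \<Rightarrow> int) \<Rightarrow> int \<Rightarrow> int" where
  "super_count m F v = int (val_count {- int m..-1} F v) - int (val_count {1..} F v)"

definition bruhat_dominates :: "nat \<Rightarrow> (int \<Rightarrow> int) \<Rightarrow> (int \<Rightarrow> int) \<Rightarrow> bool" where
  "bruhat_dominates m f g \<longleftrightarrow>
     (\<forall>v. val_count (idx m) g v = val_count (idx m) f v) \<and> (\<forall>v. neg_rank m g v \<le> neg_rank m f v)"

definition super_dominates :: "nat \<Rightarrow> (int \<Rightarrow> int) \<Rightarrow> (int \<Rightarrow> int) \<Rightarrow> bool" where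
  "super_dominates m \<phi> \<psi> \<longleftrightarrow>
     (\<forall>v. super_count m \<psi> v = super_count m \<phi> v) \<and> (\<forall>v. neg_rank m \<psi> v \<le> neg_rank m \<phi> v)"

lemma val_count_inj:
  assumes "inj_on F B"
  shows "val_count B F v = (if v \<in> F ` B then 1 else 0)"
proof (cases "v \<in> F ` B")
  case True
  then obtain y where "y \<in> B" "F y = v" by auto
  then have e: "{z \<in> B. F z = v} = {y}" using assms by (auto simp: inj_on_def)
  show ?thesis unfolding val_count_def e using True by simp
next
  case False
  then have e: "{z \<in> B. F z = v} = {}" by auto
  show ?thesis unfolding val_count_def e using False by simp
qed

lemma val_count_le_one: "inj_on F B \<Longrightarrow> val_count B F v \<le> 1"
  by (simp add: val_count_inj)

lemma val_count_pos_iff: "inj_on F B \<Longrightarrow> 0 < val_count B F v \<longleftrightarrow> v \<in> F ` B"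
  by (simp add: val_count_inj)

lemma val_count_update:
  assumes "finite {z \<in> B. F z = v}" "i \<in> B"
  shows "int (val_count B (F(i := c)) v) + (if F i = v then 1 else 0)
       = int (val_count B F v) + (if c = v then 1 else 0)"
proof -
  have fin: "finite {z \<in> B - {i}. F z = v}" using assms(1) by (rule rev_finite_subset) auto
  have "{z \<in> B. (F(i := c)) z = v} = {z \<in> B - {i}. F z = v} \<union> (if c = v then {i} else {})"
    "{z \<in> B. F z = v} = {z \<in> B - {i}. F z = v} \<union> (if F i = v then {i} else {})"
    using assms(2) by auto
  then show ?thesis using fin by (simp add: val_count_def)
qed

lemma val_count_idx_split:
  assumes "F \<in> Zplus m"
  shows "val_count (idx m) F v = val_count {- int m..-1} F v + val_count {1..} F v"
proof -
  have e: "{z \<in> idx m. F z = v} = {z \<in> {- int m..-1}. F z = v} \<union> {z \<in> {1..}. F z = v}"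
    by (auto simp: idx_eq)
  have "finite {z \<in> {1..}. F z = v}"
    using finite_Zplus_ge[OF assms, of v] by (rule rev_finite_subset) auto
  then have "card ({z \<in> {- int m..-1}. F z = v} \<union> {z \<in> {1..}. F z = v})
      = card {z \<in> {- int m..-1}. F z = v} + card {z \<in> {1..}. F z = v}"
    by (intro card_Un_disjoint[OF finite_neg_block]) auto
  then show ?thesis unfolding val_count_def e .
qed

lemma card_val_less_succ:
  assumes "finite {z \<in> B. F z < v + 1}"
  shows "card {z \<in> B. F z < v + 1} = card {z \<in> B. F z < v} + val_count B F v"
proof -
  have "{z \<in> B. F z < v + 1} = {z \<in> B. F z < v} \<union> {z \<in> B. F z = v}" by auto
  moreover have "finite {z \<in> B. F z < v}" "finite {z \<in> B. F z = v}"
    by (rule rev_finite_subset[OF assms]; auto)+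
  ultimately show ?thesis unfolding val_count_def by (simp add: card_Un_disjoint disjoint_iff)
qed

lemma card_val_less_split_band:
  fixes \<phi> \<psi> :: "int \<Rightarrow> int"
  assumes "finite {z \<in> B. \<psi> z < v}" "\<And>z. \<psi> z \<le> \<phi> z"
  shows "card {z \<in> B. \<psi> z < v} = card {z \<in> B. \<phi> z < v} + card {z \<in> B. \<psi> z < v \<and> v \<le> \<phi> z}"
proof -
  have "{z \<in> B. \<psi> z < v} = {z \<in> B. \<phi> z < v} \<union> {z \<in> B. \<psi> z < v \<and> v \<le> \<phi> z}"
    using assms(2) le_less_trans by auto
  moreover have "finite {z \<in> B. \<phi> z < v}" "finite {z \<in> B. \<psi> z < v \<and> v \<le> \<phi> z}"
    by (rule rev_finite_subset[OF assms(1)]; use assms(2) le_less_trans in blast)+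
  ultimately show ?thesis by (simp add: card_Un_disjoint disjoint_iff)
qed

lemma neg_rank_mono:
  assumes "\<And>z. z \<in> {- int m..-1} \<Longrightarrow> G z \<le> F z"
  shows "neg_rank m G v \<le> neg_rank m F v"
  unfolding neg_rank_def using assms by (intro card_mono[OF finite_neg_block]) (auto intro: order_trans)

lemma neg_rank_succ: "neg_rank m F v = neg_rank m F (v + 1) + val_count {- int m..-1} F v"
proof -
  have e: "{z \<in> {- int m..-1}. v + 1 \<le> F z} \<union> {z \<in> {- int m..-1}. F z = v} = {z \<in> {- int m..-1}. v \<le> F z}"
    by auto
  have "card ({z \<in> {- int m..-1}. v + 1 \<le> F z} \<union> {z \<in> {- int m..-1}. F z = v})
      = card {z \<in> {- int m..-1}. v + 1 \<le> F z} + card {z \<in> {- int m..-1}. F z = v}"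
    by (rule card_Un_disjoint[OF finite_neg_block finite_neg_block]) auto
  then show ?thesis unfolding e neg_rank_def val_count_def .
qed

lemma card_neg_less_add_neg_rank: "card {z \<in> {- int m..-1}. F z < v} + neg_rank m F v = m"
proof -
  have e: "{z \<in> {- int m..-1}. F z < v} \<union> {z \<in> {- int m..-1}. v \<le> F z} = {- int m..-1}" by auto
  have "card ({z \<in> {- int m..-1}. F z < v} \<union> {z \<in> {- int m..-1}. v \<le> F z})
      = card {z \<in> {- int m..-1}. F z < v} + card {z \<in> {- int m..-1}. v \<le> F z}"
    by (rule card_Un_disjoint[OF finite_neg_block finite_neg_block]) auto
  then show ?thesis unfolding e neg_rank_def by simp
qed

lemma neg_rank_natural: "neg_rank m (natural m f) = neg_rank m f"
  unfolding neg_rank_def by (intro ext arg_cong[where f = card]) (auto simp: natural_neg)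

lemma val_count_neg_natural: "val_count {- int m..-1} (natural m f) = val_count {- int m..-1} f"
  unfolding val_count_def by (intro ext arg_cong[where f = card]) (auto simp: natural_neg)

lemma val_count_pos_natural:
  assumes f: "f \<in> Zplus_dom m"
  shows "val_count {1..} (natural m f) v + val_count {1..} f v = 1"
proof -
  have "inj_on f {1..}" using f by (simp add: Zplus_dom_iff strict_antimono_iff_antimono)
  moreover have "inj_on (natural m f) {1..}"
    using strict_mono_natural[OF f] by (rule strict_mono_on_imp_inj_on)
  ultimately show ?thesis by (simp add: val_count_inj natural_image[OF f])
qed

lemma super_count_natural:
  assumes f: "f \<in> Zplus_dom m"
  shows "super_count m (natural m f) v = int (val_count (idx m) f v) - 1"
  using val_count_pos_natural[OF f, of v] val_count_idx_split[of f m v] f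
  by (simp add: super_count_def val_count_neg_natural Zplus_dom_iff)

lemma super_dominates_natural_iff:
  assumes "f \<in> Zplus_dom m" "g \<in> Zplus_dom m"
  shows "super_dominates m (natural m f) (natural m g) \<longleftrightarrow> bruhat_dominates m f g"
  using assms by (simp add: super_dominates_def bruhat_dominates_def super_count_natural neg_rank_natural)

lemma bruhat_dominates_trans:
  "bruhat_dominates m f g \<Longrightarrow> bruhat_dominates m g h \<Longrightarrow> bruhat_dominates m f h"
  by (auto simp: bruhat_dominates_def intro: order_trans)

lemma super_dominates_trans:
  "super_dominates m \<phi> \<psi> \<Longrightarrow> super_dominates m \<psi> \<chi> \<Longrightarrow> super_dominates m \<phi> \<chi>"
  by (auto simp: super_dominates_def intro: order_trans)

section \<open>Both orders respect the invariants\<close>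

lemma bruhat_step_dominates:
  assumes "bruhat_step m F G"
  shows "bruhat_dominates m G F"
proof -
  obtain i j where ij: "i \<in> idx m" "j \<in> idx m" "i < j" "F i < F j" "G = tact F i j"
    using assms by (auto simp: bruhat_step_def)
  have "val_count (idx m) G v = val_count (idx m) F v" for v
    unfolding val_count_def ij(5) by (rule card_tact[OF ij(1,2)])
  moreover have "neg_rank m F v \<le> neg_rank m G v" for v
  proof (cases "j < 0")
    case True
    then have "i \<in> {- int m..-1}" "j \<in> {- int m..-1}" using ij by (auto simp: idx_def)
    then show ?thesis unfolding neg_rank_def ij(5) by (simp only: card_tact order_refl)
  next
    case False
    then have "F z \<le> G z" if "z \<in> {- int m..-1}" for z
      using ij that by (cases "z = i") auto
    then show ?thesis by (rule neg_rank_mono)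
  qed
  ultimately show ?thesis by (simp add: bruhat_dominates_def)
qed

lemma bruhat_ge_imp_dominates:
  assumes "bruhat_ge m f g"
  shows "bruhat_dominates m f g"
proof (cases "g = f")
  case False
  then have "(bruhat_step m)\<^sup>+\<^sup>+ g f" using assms by (simp add: bruhat_ge_def)
  then show ?thesis
    by (induction rule: tranclp_induct)
      (auto intro: bruhat_step_dominates bruhat_dominates_trans)
qed (simp add: bruhat_dominates_def)

lemma super_count_lower_pair:
  assumes "\<Theta> \<in> Zsuper m" "x \<in> {- int m..-1}" "y \<in> {1..}" "\<Theta> x = \<Theta> y"
  shows "super_count m (\<Theta>(x := \<Theta> x - 1, y := \<Theta> y - 1)) v = super_count m \<Theta> v"
proof -
  let ?G = "\<Theta>(x := \<Theta> x - 1, y := \<Theta> y - 1)"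
  have "val_count {- int m..-1} ?G v = val_count {- int m..-1} (\<Theta>(x := \<Theta> x - 1)) v"
    unfolding val_count_def using assms(3) by (intro arg_cong[where f = card]) auto
  then have neg: "int (val_count {- int m..-1} ?G v) + (if \<Theta> x = v then 1 else 0)
      = int (val_count {- int m..-1} \<Theta> v) + (if \<Theta> x - 1 = v then 1 else 0)"
    using val_count_update[OF finite_neg_block assms(2)] by simp
  have "val_count {1..} ?G v = val_count {1..} (\<Theta>(y := \<Theta> y - 1)) v"
    unfolding val_count_def using assms(2) by (intro arg_cong[where f = card]) auto
  moreover have "finite {z \<in> {1..}. \<Theta> z = v}"
    using finite_Zsuper_less[OF assms(1), of "v + 1"] by (rule rev_finite_subset) auto
  ultimately have pos: "int (val_count {1..} ?G v) + (if \<Theta> x = v then 1 else 0)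
      = int (val_count {1..} \<Theta> v) + (if \<Theta> x - 1 = v then 1 else 0)"
    using val_count_update[OF _ assms(3)] assms(4) by simp
  show ?thesis using neg pos unfolding super_count_def by linarith
qed

lemma sdown_dominates:
  assumes "sdown m F G"
  shows "super_dominates m F G"
proof -
  have F: "F \<in> Zsuper m" using assms by (simp add: sdown_def)
  consider (lower) i j where "i \<in> {- int m..-1}" "j \<in> {1..}" "F i = F j"
      "G = (\<lambda>k. F k - dvec i k + dvec j k)"
    | (swap) i j where "{i, j} \<subseteq> {- int m..-1} \<or> {i, j} \<subseteq> {1..}" "G = tact F i j"
    using assms unfolding sdown_def by (auto simp: idx_def)
  then show ?thesis
  proof cases
    case lower
    then have G: "G = F(i := F i - 1, j := F j - 1)" by (auto simp: dvec_def)
    have "neg_rank m G v \<le> neg_rank m F v" for v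
      by (rule neg_rank_mono) (simp add: G)
    then show ?thesis
      using super_count_lower_pair[OF F lower(1-3)] by (simp add: super_dominates_def G)
  next
    case swap
    then have neg: "{i, j} \<subseteq> {- int m..-1} \<or> {i, j} \<inter> {- int m..-1} = {}"
      and pos: "{i, j} \<subseteq> {1..} \<or> {i, j} \<inter> {1..} = {}"
      by auto
    have "val_count {- int m..-1} G v = val_count {- int m..-1} F v"
      "val_count {1..} G v = val_count {1..} F v" "neg_rank m G v = neg_rank m F v" for v
      unfolding val_count_def neg_rank_def swap(2)
      by (rule card_tact_block[OF neg] card_tact_block[OF pos])+
    then show ?thesis by (simp add: super_dominates_def super_count_def)
  qed
qed

lemma super_ge_imp_dominates:
  assumes "super_ge m \<phi> \<psi>"
  shows "super_dominates m \<phi> \<psi>"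
proof (cases "\<phi> = \<psi>")
  case False
  then have "(sdown m)\<^sup>+\<^sup>+ \<phi> \<psi>" using assms by (simp add: super_ge_def super_gt_def)
  then show ?thesis
    by (induction rule: tranclp_induct) (auto intro: sdown_dominates super_dominates_trans)
qed (simp add: super_dominates_def)

section \<open>Super Bruhat chains from the invariants\<close>

lemma sdown_lower_pair:
  assumes "\<Theta> \<in> Zsuper m" "x \<in> {- int m..-1}" "y \<in> {1..}" "\<Theta> x = v" "\<Theta> y = v"
  shows "sdown m \<Theta> (\<Theta>(x := v - 1, y := v - 1))"
proof -
  have "x \<in> idx m" "y \<in> idx m" "x < 0" "0 < y" using assms(2,3) by (auto simp: idx_def)
  moreover have "\<Theta>(x := v - 1, y := v - 1) = (\<lambda>k. \<Theta> k - dvec x k + dvec y k)"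
    using assms(4,5) \<open>x < 0\<close> \<open>0 < y\<close> by (intro ext) (simp add: dvec_def)
  ultimately have "\<exists>i j. i \<in> idx m \<and> j \<in> idx m \<and> i < 0 \<and> 0 < j \<and> \<Theta> i = \<Theta> j \<and>
      \<Theta>(x := v - 1, y := v - 1) = (\<lambda>k. \<Theta> k - dvec i k + dvec j k)"
    using assms(4,5) by (intro exI[of _ x] exI[of _ y]) simp
  then show ?thesis using assms(1) unfolding sdown_def by (intro conjI disjI1)
qed

lemma sdown_lower_pairs:
  assumes "finite X" "X \<subseteq> {- int m..-1}" "finite Y" "Y \<subseteq> {1..}" "card X = card Y"
    and "\<Theta> \<in> Zsuper m" "\<forall>z\<in>X \<union> Y. \<Theta> z = v"
  shows "(sdown m)\<^sup>*\<^sup>* \<Theta> (\<lambda>z. if z \<in> X \<union> Y then v - 1 else \<Theta> z)"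
  using assms
proof (induction X arbitrary: Y \<Theta> rule: finite_induct)
  case empty
  then show ?case by simp
next
  case (insert x X)
  have "card Y \<noteq> 0" using insert.prems(4) insert.hyps by simp
  then obtain y where y: "y \<in> Y" by fastforce
  have x: "x \<in> {- int m..-1}" "x \<notin> Y" and "y \<in> {1..}"
    using insert.prems(1,3) y by auto
  then have "y \<notin> X" using insert.prems(1) by fastforce
  define \<Theta>' where "\<Theta>' = \<Theta>(x := v - 1, y := v - 1)"
  have "sdown m \<Theta> \<Theta>'"
    unfolding \<Theta>'_def using insert.prems(5,6) x \<open>y \<in> {1..}\<close> y by (intro sdown_lower_pair) auto
  moreover have "(sdown m)\<^sup>*\<^sup>* \<Theta>' (\<lambda>z. if z \<in> X \<union> (Y - {y}) then v - 1 else \<Theta>' z)"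
  proof (rule insert.IH)
    show "\<Theta>' \<in> Zsuper m"
      by (rule Zsuper_local_change[of \<Theta> m "{x, y}"])
        (use insert.prems(5) x \<open>y \<in> {1..}\<close> in \<open>auto simp: \<Theta>'_def idx_def\<close>)
    show "\<forall>z\<in>X \<union> (Y - {y}). \<Theta>' z = v"
      using insert.prems(6) insert.hyps(2) x(2) \<open>y \<notin> X\<close> by (auto simp: \<Theta>'_def)
  qed (use insert.prems insert.hyps y in auto)
  moreover have "(\<lambda>z. if z \<in> X \<union> (Y - {y}) then v - 1 else \<Theta>' z)
      = (\<lambda>z. if z \<in> insert x X \<union> Y then v - 1 else \<Theta> z)"
    using y by (intro ext) (simp add: \<Theta>'_def)
  ultimately show ?case by (simp add: converse_rtranclp_into_rtranclp)
qed

definition clamp :: "(int \<Rightarrow> int) \<Rightarrow> (int \<Rightarrow> int) \<Rightarrow> int \<Rightarrow> int \<Rightarrow> int" where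
  "clamp \<phi> \<psi> v z = max (\<psi> z) (min (\<phi> z) v)"

lemma sdown_clamp_step:
  assumes \<phi>: "\<phi> \<in> Zsuper m" and \<psi>: "\<psi> \<in> Zsuper m" and le: "\<And>z. \<psi> z \<le> \<phi> z"
    and balanced: "card {z \<in> {- int m..-1}. \<psi> z < v \<and> v \<le> \<phi> z}
                   = card {z \<in> {1..}. \<psi> z < v \<and> v \<le> \<phi> z}"
  shows "(sdown m)\<^sup>*\<^sup>* (clamp \<phi> \<psi> v) (clamp \<phi> \<psi> (v - 1))"
proof -
  note D = Zsuper_finite_difference[OF \<phi> \<psi>]
  define X where "X = {z \<in> {- int m..-1}. \<psi> z < v \<and> v \<le> \<phi> z}"
  define Y where "Y = {z \<in> {1..}. \<psi> z < v \<and> v \<le> \<phi> z}"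
  have XY: "z \<in> X \<union> Y \<longleftrightarrow> \<psi> z < v \<and> v \<le> \<phi> z" for z
  proof -
    have "\<psi> z < v \<and> v \<le> \<phi> z \<Longrightarrow> z \<in> idx m" using D(2) by auto
    then show ?thesis by (auto simp: X_def Y_def idx_eq)
  qed
  have "finite X" unfolding X_def by (rule finite_neg_block)
  moreover have "finite Y" using D(1) by (rule rev_finite_subset) (auto simp: Y_def)
  moreover have "clamp \<phi> \<psi> v \<in> Zsuper m"
    by (rule Zsuper_local_change[OF \<psi> D(1,2)]) (simp add: clamp_def)
  ultimately have "(sdown m)\<^sup>*\<^sup>* (clamp \<phi> \<psi> v) (\<lambda>z. if z \<in> X \<union> Y then v - 1 else clamp \<phi> \<psi> v z)"
    using balanced by (intro sdown_lower_pairs) (auto simp: X_def Y_def clamp_def)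
  moreover have "(if z \<in> X \<union> Y then v - 1 else clamp \<phi> \<psi> v z) = clamp \<phi> \<psi> (v - 1) z" for z
    using XY[of z] le[of z] by (auto simp: clamp_def)
  ultimately show ?thesis by simp
qed

lemma sdown_rtranclp_if_levels_balanced:
  assumes \<phi>: "\<phi> \<in> Zsuper m" and \<psi>: "\<psi> \<in> Zsuper m" and le: "\<And>z. \<psi> z \<le> \<phi> z"
    and balanced: "\<And>v. card {z \<in> {- int m..-1}. \<psi> z < v \<and> v \<le> \<phi> z}
                      = card {z \<in> {1..}. \<psi> z < v \<and> v \<le> \<phi> z}"
  shows "(sdown m)\<^sup>*\<^sup>* \<phi> \<psi>"
proof -
  obtain L where L: "\<And>z. L \<le> \<psi> z" using Zsuper_bounded_below[OF \<psi>] by blast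
  define H where "H = max L (Max (\<phi> ` {z. \<phi> z \<noteq> \<psi> z}))"
  have H: "\<phi> z \<le> H" if "\<psi> z < \<phi> z" for z
    using that Zsuper_finite_difference(1)[OF \<phi> \<psi>] by (auto simp: H_def intro: max.coboundedI2)
  have "clamp \<phi> \<psi> H = \<phi>"
  proof
    fix z show "clamp \<phi> \<psi> H z = \<phi> z"
      using le[of z] H[of z] by (cases "\<psi> z < \<phi> z") (auto simp: clamp_def)
  qed
  have "clamp \<phi> \<psi> L = \<psi>"
  proof
    fix z show "clamp \<phi> \<psi> L z = \<psi> z" using le[of z] L[of z] by (simp add: clamp_def)
  qed
  have "(sdown m)\<^sup>*\<^sup>* \<phi> (clamp \<phi> \<psi> (H - int k))" for k
  proof (induction k)
    case 0
    then show ?case using \<open>clamp \<phi> \<psi> H = \<phi>\<close> by simp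
  next
    case (Suc k)
    have "H - int (Suc k) = H - int k - 1" by simp
    then show ?case using Suc sdown_clamp_step[OF \<phi> \<psi> le balanced] by (metis rtranclp_trans)
  qed
  from this[of "nat (H - L)"] show ?thesis using \<open>clamp \<phi> \<psi> L = \<psi>\<close> by (simp add: H_def)
qed

text \<open>Summing the equal super multiplicities of \<open>\<phi>\<close> and \<open>\<psi>\<close> over all values below \<open>v\<close>.\<close>

lemma super_count_lower_balance:
  assumes \<phi>: "\<phi> \<in> Zsuper m" and \<psi>: "\<psi> \<in> Zsuper m" and L: "\<And>z. L \<le> \<phi> z" "\<And>z. L \<le> \<psi> z"
    and same: "\<And>v. super_count m \<psi> v = super_count m \<phi> v"
  shows "int (card {z \<in> {1..}. \<psi> z < v}) - int (card {z \<in> {1..}. \<phi> z < v})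
       = int (card {z \<in> {- int m..-1}. \<psi> z < v}) - int (card {z \<in> {- int m..-1}. \<phi> z < v})"
proof -
  have empty: "{z \<in> B. \<phi> z < v} = {}" "{z \<in> B. \<psi> z < v} = {}" if "v \<le> L" for B v
  proof -
    have "\<not> \<phi> z < v" "\<not> \<psi> z < v" for z using L[of z] that by linarith+
    then show "{z \<in> B. \<phi> z < v} = {}" "{z \<in> B. \<psi> z < v} = {}" by auto
  qed
  show ?thesis
  proof (cases "L \<le> v")
    case True
    then show ?thesis
    proof (induction v rule: int_ge_induct)
      case base
      show ?case unfolding empty[OF order_refl] by simp
    next
      case (step v)
      show ?case
        using step.IH same[of v] unfolding super_count_def
        using card_val_less_succ[of "{- int m..-1}" \<phi> v, OF finite_neg_block]
          card_val_less_succ[of "{- int m..-1}" \<psi> v, OF finite_neg_block]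
          card_val_less_succ[of "{1..}" \<phi> v, OF finite_Zsuper_less[OF \<phi>]]
          card_val_less_succ[of "{1..}" \<psi> v, OF finite_Zsuper_less[OF \<psi>]]
        by linarith
    qed
  next
    case False
    then have "v \<le> L" by simp
    show ?thesis unfolding empty[OF \<open>v \<le> L\<close>] by simp
  qed
qed

lemma super_dominates_le:
  assumes \<phi>: "\<phi> \<in> Zsuper_dom m" and \<psi>: "\<psi> \<in> Zsuper_dom m" and dom: "super_dominates m \<phi> \<psi>"
  shows "\<psi> z \<le> \<phi> z"
proof -
  have \<phi>': "\<phi> \<in> Zsuper m" "strict_antimono_on {- int m..-1} \<phi>" "strict_mono_on {1..} \<phi>"
    and \<psi>': "\<psi> \<in> Zsuper m" "strict_antimono_on {- int m..-1} \<psi>" "strict_mono_on {1..} \<psi>"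
    using \<phi> \<psi> by (simp_all add: Zsuper_dom_iff)
  consider "z \<in> {- int m..-1}" | "z \<in> {1..}" | "z \<notin> idx m" by (auto simp: idx_eq)
  then show ?thesis
  proof cases
    case 1
    then show ?thesis
      using dom by (intro strict_antimono_le_if_card_le[OF _ _ 1 \<psi>'(2) \<phi>'(2)])
        (auto simp: super_dominates_def neg_rank_def)
  next
    case 2
    obtain L1 L2 where "\<And>z. L1 \<le> \<phi> z" "\<And>z. L2 \<le> \<psi> z"
      using Zsuper_bounded_below[OF \<phi>'(1)] Zsuper_bounded_below[OF \<psi>'(1)] by metis
    then have "\<And>z. min L1 L2 \<le> \<phi> z" "\<And>z. min L1 L2 \<le> \<psi> z" by (simp_all add: min.coboundedI1 min.coboundedI2)
    moreover have "\<And>v. super_count m \<psi> v = super_count m \<phi> v"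
      using dom by (simp add: super_dominates_def)
    ultimately have balance:
      "int (card {y \<in> {1..}. \<psi> y < \<phi> z + 1}) - int (card {y \<in> {1..}. \<phi> y < \<phi> z + 1})
       = int (card {y \<in> {- int m..-1}. \<psi> y < \<phi> z + 1})
         - int (card {y \<in> {- int m..-1}. \<phi> y < \<phi> z + 1})"
      by (rule super_count_lower_balance[OF \<phi>'(1) \<psi>'(1)])
    have "neg_rank m \<psi> (\<phi> z + 1) \<le> neg_rank m \<phi> (\<phi> z + 1)"
      using dom by (simp add: super_dominates_def)
    then have "card {y \<in> {1..}. \<phi> y < \<phi> z + 1} \<le> card {y \<in> {1..}. \<psi> y < \<phi> z + 1}"
      using balance card_neg_less_add_neg_rank[of m \<phi> "\<phi> z + 1"]
        card_neg_less_add_neg_rank[of m \<psi> "\<phi> z + 1"]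
      by linarith
    moreover have "strict_antimono_on {1..} (\<lambda>y. - \<phi> y)" "strict_antimono_on {1..} (\<lambda>y. - \<psi> y)"
      using \<phi>'(3) \<psi>'(3) by (auto simp: monotone_on_def)
    ultimately have "- \<phi> z \<le> - \<psi> z"
      by (intro strict_antimono_le_if_card_le[OF _ _ 2]) auto
    then show ?thesis by simp
  next
    case 3
    then show ?thesis using \<phi>'(1) \<psi>'(1) by (simp add: Zsuper_def)
  qed
qed

lemma super_dominates_imp_super_ge:
  assumes \<phi>: "\<phi> \<in> Zsuper_dom m" and \<psi>: "\<psi> \<in> Zsuper_dom m" and dom: "super_dominates m \<phi> \<psi>"
  shows "super_ge m \<phi> \<psi>"
proof -
  have \<phi>': "\<phi> \<in> Zsuper m" and \<psi>': "\<psi> \<in> Zsuper m" using \<phi> \<psi> by (simp_all add: Zsuper_dom_iff)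
  have le: "\<And>z. \<psi> z \<le> \<phi> z" by (rule super_dominates_le[OF \<phi> \<psi> dom])
  obtain L where L: "\<And>z. L \<le> \<psi> z" using Zsuper_bounded_below[OF \<psi>'] by blast
  then have "\<And>z. L \<le> \<phi> z" using le order_trans by blast
  moreover have "\<And>v. super_count m \<psi> v = super_count m \<phi> v"
    using dom by (simp add: super_dominates_def)
  ultimately have balance: "int (card {z \<in> {1..}. \<psi> z < v}) - int (card {z \<in> {1..}. \<phi> z < v})
      = int (card {z \<in> {- int m..-1}. \<psi> z < v}) - int (card {z \<in> {- int m..-1}. \<phi> z < v})" for v
    using super_count_lower_balance[OF \<phi>' \<psi>' _ L] by blast
  have "card {z \<in> {- int m..-1}. \<psi> z < v \<and> v \<le> \<phi> z} = card {z \<in> {1..}. \<psi> z < v \<and> v \<le> \<phi> z}"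
    for v
    using balance[of v]
      card_val_less_split_band[where B = "{- int m..-1}" and v = v and \<phi> = \<phi> and \<psi> = \<psi>, OF finite_neg_block le]
      card_val_less_split_band[where B = "{1..}" and v = v and \<phi> = \<phi> and \<psi> = \<psi>, OF finite_Zsuper_less[OF \<psi>'] le]
    by linarith
  then have "(sdown m)\<^sup>*\<^sup>* \<phi> \<psi>" by (rule sdown_rtranclp_if_levels_balanced[OF \<phi>' \<psi>' le])
  then show ?thesis by (auto simp: super_ge_def super_gt_def dest: rtranclpD)
qed

lemma super_ge_iff_dominates:
  assumes "\<phi> \<in> Zsuper_dom m" "\<psi> \<in> Zsuper_dom m"
  shows "super_ge m \<phi> \<psi> \<longleftrightarrow> super_dominates m \<phi> \<psi>"
  using super_ge_imp_dominates super_dominates_imp_super_ge[OF assms] by blast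

section \<open>Bruhat chains from the invariants\<close>

lemma Zplus_dom_eqI:
  assumes F: "F \<in> Zplus_dom m" and f: "f \<in> Zplus_dom m"
    and val_count: "\<And>v. val_count (idx m) F v = val_count (idx m) f v"
    and neg_rank: "\<And>v. neg_rank m F v = neg_rank m f v"
  shows "F = f"
proof
  fix z
  have F': "F \<in> Zplus m" "strict_antimono_on {- int m..-1} F" "strict_antimono_on {1..} F"
    and f': "f \<in> Zplus m" "strict_antimono_on {- int m..-1} f" "strict_antimono_on {1..} f"
    using F f by (simp_all add: Zplus_dom_iff)
  have neg: "F z = f z" if z: "z \<in> {- int m..-1}" for z
  proof -
    have "F z \<le> f z"
      by (rule strict_antimono_le_if_card_le[OF _ _ z F'(2) f'(2)])
        (use z neg_rank in \<open>auto simp: neg_rank_def\<close>)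
    moreover have "f z \<le> F z"
      by (rule strict_antimono_le_if_card_le[OF _ _ z f'(2) F'(2)])
        (use z neg_rank in \<open>auto simp: neg_rank_def\<close>)
    ultimately show ?thesis by simp
  qed
  then have "val_count {- int m..-1} F v = val_count {- int m..-1} f v" for v
    unfolding val_count_def by (intro arg_cong[where f = card]) auto
  then have "val_count {1..} F v = val_count {1..} f v" for v
    using val_count[of v] val_count_idx_split[OF F'(1)] val_count_idx_split[OF f'(1)] by simp
  moreover have "inj_on F {1..}" "inj_on f {1..}"
    using F'(3) f'(3) by (simp_all add: strict_antimono_iff_antimono)
  ultimately have "v \<in> F ` {1..} \<longleftrightarrow> v \<in> f ` {1..}" for v
    by (metis val_count_inj zero_neq_one)
  then have "F ` {1..} = f ` {1..}" by blast
  then have pos: "F z = f z" if "z \<in> {1..}"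
    using that by (intro strict_antimono_eq_if_image_eq[OF _ _ that F'(3) f'(3)]) auto
  show "F z = f z"
  proof (cases "z \<in> idx m")
    case True
    then show ?thesis using neg pos by (auto simp: idx_eq)
  next
    case False
    then show ?thesis using F'(1) f'(1) by (simp add: Zplus_def)
  qed
qed

lemma finite_int_set_maximal_run:
  fixes V :: "int set"
  assumes "finite V" "V \<noteq> {}"
  obtains u w where "u < w" "u \<notin> V" "w + 1 \<notin> V" "{u<..w} \<subseteq> V"
proof -
  define w where "w = Max V"
  have w: "w \<in> V" "w + 1 \<notin> V" using assms Max_ge[OF assms(1), of "w + 1"] by (auto simp: w_def)
  define U where "U = {v. Min V - 1 \<le> v \<and> v < w \<and> v \<notin> V}"
  have "Min V - 1 \<in> U"
    using assms Min_le[OF assms(1), of "Min V - 1"] Min_le[OF assms(1) w(1)] by (auto simp: U_def)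
  moreover have "finite U" by (rule finite_subset[of _ "{Min V - 1..<w}"]) (auto simp: U_def)
  ultimately have u: "Max U \<in> U" "\<And>v. v \<in> U \<Longrightarrow> v \<le> Max U" by (auto intro: Max_in)
  have "{Max U<..w} \<subseteq> V"
  proof
    fix v assume v: "v \<in> {Max U<..w}"
    show "v \<in> V"
    proof (rule ccontr)
      assume "v \<notin> V"
      then have "v \<in> U" using v w(1) u(1) by (cases "v = w") (auto simp: U_def)
      then show False using u(2) v by fastforce
    qed
  qed
  then show ?thesis using that[of "Max U" w] u(1) w(2) by (auto simp: U_def)
qed

lemma finite_neg_rank_gaps:
  assumes F: "F \<in> Zplus_dom m" and f: "f \<in> Zplus_dom m"
  shows "finite {v. neg_rank m F v < neg_rank m f v}"
proof (rule finite_subset)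
  show "{v. neg_rank m F v < neg_rank m f v} \<subseteq> {min (F (-1)) (f (-1))..f (- int m)}"
  proof
    fix v assume "v \<in> {v. neg_rank m F v < neg_rank m f v}"
    then have lt: "neg_rank m F v < neg_rank m f v" by simp
    have "min (F (-1)) (f (-1)) \<le> v"
    proof (rule ccontr)
      assume "\<not> min (F (-1)) (f (-1)) \<le> v"
      then have "v \<le> F z" "v \<le> f z" if "z \<in> {- int m..-1}" for z
        using Zplus_dom_neg_bounds(1)[OF F that] Zplus_dom_neg_bounds(1)[OF f that] by linarith+
      then have "{z \<in> {- int m..-1}. v \<le> F z} = {z \<in> {- int m..-1}. v \<le> f z}" by blast
      then show False using lt by (simp add: neg_rank_def)
    qed
    moreover have "{z \<in> {- int m..-1}. v \<le> f z} \<noteq> {}"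
      using lt unfolding neg_rank_def by (metis card.empty less_nat_zero_code)
    then obtain z where "z \<in> {- int m..-1}" "v \<le> f z" by blast
    then have "v \<le> f (- int m)" using Zplus_dom_neg_bounds(2)[OF f] by fastforce
    ultimately show "v \<in> {min (F (-1)) (f (-1))..f (- int m)}" by simp
  qed
qed simp

lemma neg_rank_gaps_nonempty:
  assumes F: "F \<in> Zplus_dom m" and f: "f \<in> Zplus_dom m" and dom: "bruhat_dominates m f F"
    and "F \<noteq> f"
  shows "{v. neg_rank m F v < neg_rank m f v} \<noteq> {}"
proof
  assume "{v. neg_rank m F v < neg_rank m f v} = {}"
  then have "neg_rank m F v = neg_rank m f v" for v
    using dom by (auto simp: bruhat_dominates_def le_less)
  then have "F = f" using Zplus_dom_eqI[OF F f] dom by (simp add: bruhat_dominates_def)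
  then show False using \<open>F \<noteq> f\<close> by simp
qed

text \<open>Let \<open>(u, w]\<close> be a maximal run of values at which the negative rank of \<open>F\<close> is too
  small.  Comparing multiplicities at its two ends shows that \<open>w\<close> occurs in \<open>F\<close> only at a
  positive index and \<open>u\<close> only at a negative one.\<close>

lemma exists_rank_gap:
  assumes F: "F \<in> Zplus_dom m" and f: "f \<in> Zplus_dom m" and dom: "bruhat_dominates m f F"
    and "F \<noteq> f"
  obtains x y where "x \<in> {- int m..-1}" "y \<in> {1..}" "F x < F y"
    "F y \<notin> F ` {- int m..-1}" "F x \<notin> F ` {1..}"
    "\<And>v. F x < v \<Longrightarrow> v \<le> F y \<Longrightarrow> neg_rank m F v < neg_rank m f v"
proof -
  have inj: "inj_on F {- int m..-1}" "inj_on F {1..}" "inj_on f {- int m..-1}" "inj_on f {1..}"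
    using F f by (simp_all add: Zplus_dom_iff strict_antimono_iff_antimono)
  have rank: "neg_rank m F v \<le> neg_rank m f v" for v using dom by (simp add: bruhat_dominates_def)
  have "val_count (idx m) F v = val_count (idx m) f v" for v
    using dom by (simp add: bruhat_dominates_def)
  then have counts: "val_count {- int m..-1} F v + val_count {1..} F v
      = val_count {- int m..-1} f v + val_count {1..} f v" for v
    using F f by (simp add: val_count_idx_split Zplus_dom_iff)
  define V where "V = {v. neg_rank m F v < neg_rank m f v}"
  have "V \<noteq> {}" unfolding V_def by (rule neg_rank_gaps_nonempty[OF F f dom \<open>F \<noteq> f\<close>])
  have "finite V" unfolding V_def by (rule finite_neg_rank_gaps[OF F f])
  obtain u w where uw: "u < w" "u \<notin> V" "w + 1 \<notin> V" "{u<..w} \<subseteq> V"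
    using finite_int_set_maximal_run[OF \<open>finite V\<close> \<open>V \<noteq> {}\<close>] by blast
  have "w \<in> V" "u + 1 \<in> V" using uw(1,4) by auto
  have "val_count {- int m..-1} F w < val_count {- int m..-1} f w"
    using \<open>w \<in> V\<close> uw(3) rank[of "w + 1"] neg_rank_succ[of m F w] neg_rank_succ[of m f w]
    by (simp add: V_def)
  then have w: "w \<notin> F ` {- int m..-1}" "w \<in> F ` {1..}"
    using counts[of w] val_count_le_one[OF inj(3), of w]
      val_count_pos_iff[OF inj(1), of w] val_count_pos_iff[OF inj(2), of w]
    by linarith+
  have "val_count {- int m..-1} f u < val_count {- int m..-1} F u"
    using \<open>u + 1 \<in> V\<close> uw(2) rank[of u] neg_rank_succ[of m F u] neg_rank_succ[of m f u]
    by (simp add: V_def)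
  then have u: "u \<in> F ` {- int m..-1}" "u \<notin> F ` {1..}"
    using counts[of u] val_count_le_one[OF inj(4), of u]
      val_count_pos_iff[OF inj(1), of u] val_count_pos_iff[OF inj(2), of u]
    by linarith+
  obtain x where x: "x \<in> {- int m..-1}" "F x = u" using u(1) by blast
  obtain y where y: "y \<in> {1..}" "F y = w" using w(2) by blast
  have "neg_rank m F v < neg_rank m f v" if "F x < v" "v \<le> F y" for v
    using uw(4) x(2) y(2) that by (auto simp: V_def)
  then show ?thesis using that[OF x(1) y(1)] x(2) y(2) uw(1) u(2) w(1) by blast
qed

lemma exists_raising_swap:
  assumes F: "F \<in> Zplus_dom m" and f: "f \<in> Zplus_dom m" and dom: "bruhat_dominates m f F"
    and "F \<noteq> f"
  obtains x y where "x \<in> {- int m..-1}" "y \<in> {1..}" "F x < F y"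
    "inj_on (tact F x y) {- int m..-1}" "inj_on (tact F x y) {1..}" "bruhat_dominates m f (tact F x y)"
proof -
  obtain x y where x: "x \<in> {- int m..-1}" and y: "y \<in> {1..}" and lt: "F x < F y"
    and new_neg: "F y \<notin> F ` {- int m..-1}" and new_pos: "F x \<notin> F ` {1..}"
    and gap: "\<And>v. F x < v \<Longrightarrow> v \<le> F y \<Longrightarrow> neg_rank m F v < neg_rank m f v"
    using exists_rank_gap[OF F f dom \<open>F \<noteq> f\<close>] by blast
  have inj: "inj_on F {- int m..-1}" "inj_on F {1..}"
    using F by (simp_all add: Zplus_dom_iff strict_antimono_iff_antimono)
  have "x \<notin> {1..}" "y \<notin> {- int m..-1}" using x y by auto
  have "inj_on (tact F x y) {- int m..-1}"
    using inj_on_fun_updI[OF inj(1) new_neg, of x] \<open>y \<notin> {- int m..-1}\<close>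
    by (subst inj_on_cong[of _ _ "F(x := F y)"]) auto
  moreover have "inj_on (tact F x y) {1..}"
    using inj_on_fun_updI[OF inj(2) new_pos, of y] \<open>x \<notin> {1..}\<close>
    by (subst inj_on_cong[of _ _ "F(y := F x)"]) auto
  moreover have "val_count (idx m) (tact F x y) v = val_count (idx m) F v" for v
    unfolding val_count_def using x y by (intro card_tact) (auto simp: idx_def)
  moreover have "neg_rank m (tact F x y) v \<le> neg_rank m f v" for v
  proof (cases "F x < v \<and> v \<le> F y")
    case True
    have sub: "{z \<in> {- int m..-1}. v \<le> tact F x y z} \<subseteq> insert x {z \<in> {- int m..-1}. v \<le> F z}"
      using \<open>y \<notin> {- int m..-1}\<close> by (auto simp: tact_def)
    have "neg_rank m (tact F x y) v \<le> card (insert x {z \<in> {- int m..-1}. v \<le> F z})"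
      unfolding neg_rank_def by (rule card_mono[OF finite.insertI[OF finite_neg_block] sub])
    also have "\<dots> \<le> neg_rank m F v + 1"
      unfolding neg_rank_def by (rule card_insert_le_m1) (simp_all add: finite_neg_block)
    finally show ?thesis using gap[of v] True by simp
  next
    case False
    then have "{z \<in> {- int m..-1}. v \<le> tact F x y z} = {z \<in> {- int m..-1}. v \<le> F z}"
      using \<open>y \<notin> {- int m..-1}\<close> lt by (auto simp: tact_def)
    then show ?thesis using dom by (simp add: neg_rank_def bruhat_dominates_def)
  qed
  ultimately show ?thesis using that[OF x y lt] dom by (simp add: bruhat_dominates_def)
qed

lemma swap_within_block:
  assumes inj: "inj_on F {- int m..-1}" "inj_on F {1..}"
    and block: "{i, j} \<subseteq> {- int m..-1} \<or> {i, j} \<subseteq> {1..}"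
  shows "inj_on (tact F i j) {- int m..-1}" "inj_on (tact F i j) {1..}"
    "neg_rank m (tact F i j) v = neg_rank m F v"
proof -
  have neg: "{i, j} \<subseteq> {- int m..-1} \<or> {i, j} \<inter> {- int m..-1} = {}"
    and pos: "{i, j} \<subseteq> {1..} \<or> {i, j} \<inter> {1..} = {}"
    using block by auto
  show "inj_on (tact F i j) {- int m..-1}" "inj_on (tact F i j) {1..}"
    by (rule inj_on_tact_block[OF inj(1) neg] inj_on_tact_block[OF inj(2) pos])+
  show "neg_rank m (tact F i j) v = neg_rank m F v"
    unfolding neg_rank_def by (rule card_tact_block[OF neg])
qed

lemma exists_sorting_swap:
  assumes "F \<in> Zplus m" "inj_on F {- int m..-1}" "inj_on F {1..}" "F \<notin> Zplus_dom m"
  obtains z where "{z, z + 1} \<subseteq> {- int m..-1} \<or> {z, z + 1} \<subseteq> {1..}" "F z < F (z + 1)"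
proof (rule ccontr)
  note ascent = that
  assume "\<not> thesis"
  have descent: "F (z + 1) < F z" if block: "{z, z + 1} \<subseteq> {- int m..-1} \<or> {z, z + 1} \<subseteq> {1..}" for z
  proof -
    have "F z \<noteq> F (z + 1)" using block assms(2,3) by (auto dest: inj_onD)
    then show ?thesis using ascent[OF block] \<open>\<not> thesis\<close> by linarith
  qed
  have "strict_antimono_on {- int m..-1} F"
    by (rule strict_antimono_on_intervalI) (simp add: descent)
  moreover have "strict_antimono_on {1..} F"
  proof (rule monotone_onI)
    fix i j :: int assume "i \<in> {1..}" "j \<in> {1..}" "i < j"
    moreover have "strict_antimono_on {1..j} F"
      by (rule strict_antimono_on_intervalI) (simp add: descent)
    ultimately show "F j < F i" using monotone_onD by fastforce
  qed
  ultimately show False using assms(1,4) by (simp add: Zplus_dom_iff)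
qed

text \<open>The bounds \<open>K\<close> and \<open>H\<close> only make the potential bounded below on candidates; swaps
  of indices below \<open>K\<close> preserve them.\<close>

definition bruhat_candidate :: "nat \<Rightarrow> (int \<Rightarrow> int) \<Rightarrow> int \<Rightarrow> int \<Rightarrow> (int \<Rightarrow> int) \<Rightarrow> bool" where
  "bruhat_candidate m f K H F \<longleftrightarrow>
     F \<in> Zplus m \<and> (\<forall>z\<ge>K. F z = 1 - z) \<and> (\<forall>z\<in>idx m. z < K \<longrightarrow> 1 - K < F z \<and> F z \<le> H) \<and>
     inj_on F {- int m..-1} \<and> inj_on F {1..} \<and> bruhat_dominates m f F"

definition potential :: "nat \<Rightarrow> int \<Rightarrow> (int \<Rightarrow> int) \<Rightarrow> int" where
  "potential m K F = (\<Sum>z \<in> {z \<in> idx m. z < K}. z * F z)"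

lemma finite_idx_below: "finite {z \<in> idx m. z < K}"
  by (rule finite_subset[of _ "{- int m..K}"]) (auto simp: idx_def)

lemma potential_tact:
  assumes "i \<in> {z \<in> idx m. z < K}" "j \<in> {z \<in> idx m. z < K}" "i \<noteq> j"
  shows "potential m K (tact F i j) = potential m K F + (j - i) * (F i - F j)"
proof -
  let ?R = "{z \<in> idx m. z < K}"
  have j: "j \<in> ?R - {i}" using assms by auto
  have split: "(\<Sum>z\<in>?R. z * G z) = i * G i + (j * G j + (\<Sum>z\<in>?R - {i} - {j}. z * G z))"
    for G :: "int \<Rightarrow> int"
    using sum.remove[OF finite_idx_below assms(1), of "\<lambda>z. z * G z"]
      sum.remove[OF _ j, of "\<lambda>z. z * G z"] finite_idx_below by simp
  have "(\<Sum>z\<in>?R - {i} - {j}. z * tact F i j z) = (\<Sum>z\<in>?R - {i} - {j}. z * F z)"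
    by (rule sum.cong) auto
  then show ?thesis
    unfolding potential_def using split[of "tact F i j"] split[of F] assms(3)
    by (simp add: algebra_simps)
qed

lemma potential_lower_bound:
  assumes "bruhat_candidate m f K H F"
  shows "- (\<Sum>z \<in> {z \<in> idx m. z < K}. \<bar>z\<bar> * (\<bar>1 - K\<bar> + \<bar>H\<bar>)) \<le> potential m K F"
proof -
  have "- (\<bar>z\<bar> * (\<bar>1 - K\<bar> + \<bar>H\<bar>)) \<le> z * F z" if "z \<in> {z \<in> idx m. z < K}" for z
  proof -
    have "\<bar>F z\<bar> \<le> \<bar>1 - K\<bar> + \<bar>H\<bar>" using assms that by (auto simp: bruhat_candidate_def)
    then have "\<bar>z * F z\<bar> \<le> \<bar>z\<bar> * (\<bar>1 - K\<bar> + \<bar>H\<bar>)" by (simp add: abs_mult mult_left_mono)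
    then show ?thesis by linarith
  qed
  then have "(\<Sum>z \<in> {z \<in> idx m. z < K}. - (\<bar>z\<bar> * (\<bar>1 - K\<bar> + \<bar>H\<bar>))) \<le> potential m K F"
    unfolding potential_def by (rule sum_mono)
  then show ?thesis by (simp add: sum_negf)
qed

lemma candidate_swap:
  assumes F: "bruhat_candidate m f K H F" and ij: "i \<in> idx m" "j \<in> idx m" "i < j" "j < K"
    and lt: "F i < F j"
    and inj: "inj_on (tact F i j) {- int m..-1}" "inj_on (tact F i j) {1..}"
    and rank: "\<And>v. neg_rank m (tact F i j) v \<le> neg_rank m f v"
  shows "bruhat_step m F (tact F i j)" "bruhat_candidate m f K H (tact F i j)"
    "potential m K (tact F i j) < potential m K F"
proof -
  have F': "F \<in> Zplus m" "\<forall>z\<ge>K. F z = 1 - z" "\<forall>z\<in>idx m. z < K \<longrightarrow> 1 - K < F z \<and> F z \<le> H"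
    "bruhat_dominates m f F"
    using F by (simp_all add: bruhat_candidate_def)
  show "bruhat_step m F (tact F i j)" using F'(1) ij lt by (auto simp: bruhat_step_def)
  have "tact F i j \<in> Zplus m"
    by (rule Zplus_local_change[OF F'(1), of "{i, j}"]) (use ij in auto)
  moreover have "\<forall>z\<ge>K. tact F i j z = 1 - z" using F'(2) ij by auto
  moreover have "\<forall>z\<in>idx m. z < K \<longrightarrow> 1 - K < tact F i j z \<and> tact F i j z \<le> H"
    using F'(3) ij by (auto simp: tact_def)
  moreover have "val_count (idx m) (tact F i j) v = val_count (idx m) F v" for v
    unfolding val_count_def by (rule card_tact[OF ij(1,2)])
  ultimately show "bruhat_candidate m f K H (tact F i j)"
    using inj rank F'(4) by (simp add: bruhat_candidate_def bruhat_dominates_def)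
  have "potential m K (tact F i j) = potential m K F + (j - i) * (F i - F j)"
    by (rule potential_tact) (use ij in auto)
  moreover have "(j - i) * (F i - F j) < 0" using ij(3) lt by (simp add: mult_pos_neg)
  ultimately show "potential m K (tact F i j) < potential m K F" by simp
qed

lemma candidate_raising_step:
  assumes F: "bruhat_candidate m f K H F" and F_dom: "F \<in> Zplus_dom m" and f: "f \<in> Zplus_dom m"
    and "1 \<le> K" and "F \<noteq> f"
  obtains F' where "bruhat_step m F F'" "bruhat_candidate m f K H F'"
    "potential m K F' < potential m K F"
proof -
  have F': "\<forall>z\<ge>K. F z = 1 - z" "\<forall>z\<in>idx m. z < K \<longrightarrow> 1 - K < F z" "bruhat_dominates m f F"
    using F by (simp_all add: bruhat_candidate_def)
  obtain x y where x: "x \<in> {- int m..-1}" and y: "y \<in> {1..}" and lt: "F x < F y"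
    and swap: "inj_on (tact F x y) {- int m..-1}" "inj_on (tact F x y) {1..}"
      "bruhat_dominates m f (tact F x y)"
    using exists_raising_swap[OF F_dom f F'(3) \<open>F \<noteq> f\<close>] by blast
  have "x \<in> idx m" "y \<in> idx m" "x < y" using x y by (auto simp: idx_def)
  moreover have "y < K"
  proof (rule ccontr)
    assume "\<not> y < K"
    then have "F y \<le> 1 - K" using F'(1) by simp
    moreover have "1 - K < F x" using F'(2) x \<open>1 \<le> K\<close> by (auto simp: idx_def)
    ultimately show False using lt by simp
  qed
  ultimately show ?thesis
    using candidate_swap[OF F _ _ _ _ lt swap(1,2)] swap(3) that by (simp add: bruhat_dominates_def)
qed

lemma candidate_sorting_step:
  assumes F: "bruhat_candidate m f K H F" and "F \<notin> Zplus_dom m"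
  obtains F' where "bruhat_step m F F'" "bruhat_candidate m f K H F'"
    "potential m K F' < potential m K F"
proof -
  have F': "F \<in> Zplus m" "\<forall>z\<ge>K. F z = 1 - z" "\<forall>z\<in>idx m. z < K \<longrightarrow> 1 - K < F z"
    "inj_on F {- int m..-1}" "inj_on F {1..}" "bruhat_dominates m f F"
    using F by (simp_all add: bruhat_candidate_def)
  obtain z where block: "{z, z + 1} \<subseteq> {- int m..-1} \<or> {z, z + 1} \<subseteq> {1..}"
    and lt: "F z < F (z + 1)"
    using exists_sorting_swap[OF F'(1,4,5) \<open>F \<notin> Zplus_dom m\<close>] by blast
  note swap = swap_within_block[OF F'(4,5) block]
  have "z \<in> idx m" "z + 1 \<in> idx m" using block by (auto simp: idx_def)
  moreover have "z + 1 < K"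
  proof (rule ccontr)
    assume "\<not> z + 1 < K"
    then have "F (z + 1) = - z" using F'(2) by simp
    moreover have "1 - K < F z \<or> F z = 1 - z"
      using F'(2,3) \<open>z \<in> idx m\<close> by (cases "z < K") auto
    ultimately show False using lt \<open>\<not> z + 1 < K\<close> by linarith
  qed
  ultimately show ?thesis
    using candidate_swap[OF F _ _ _ _ lt swap(1,2)] swap(3) F'(6) that
    by (simp add: bruhat_dominates_def)
qed

lemma candidate_imp_bruhat_ge:
  assumes f: "f \<in> Zplus_dom m" and "1 \<le> K"
  shows "bruhat_candidate m f K H F \<Longrightarrow> bruhat_ge m f F"
proof (induction F rule: measure_induct_rule[where f = "\<lambda>F. nat (potential m K F
    + (\<Sum>z \<in> {z \<in> idx m. z < K}. \<bar>z\<bar> * (\<bar>1 - K\<bar> + \<bar>H\<bar>)))"])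
  case (less F)
  show ?case
  proof (cases "F = f")
    case False
    obtain F' where step: "bruhat_step m F F'" and F': "bruhat_candidate m f K H F'"
      and "potential m K F' < potential m K F"
      using candidate_raising_step[OF less.prems _ f \<open>1 \<le> K\<close> False]
        candidate_sorting_step[OF less.prems] by blast
    then have "bruhat_ge m f F'"
      using less.IH potential_lower_bound[OF F'] by simp
    then show ?thesis using step
      by (auto simp: bruhat_ge_def intro: tranclp_into_tranclp2)
  qed (simp add: bruhat_ge_def)
qed

lemma bruhat_ge_iff_dominates:
  assumes f: "f \<in> Zplus_dom m" and g: "g \<in> Zplus_dom m"
  shows "bruhat_ge m f g \<longleftrightarrow> bruhat_dominates m f g"
proof
  assume dom: "bruhat_dominates m f g"
  obtain N where N: "1 \<le> N" "\<And>i. N \<le> i \<Longrightarrow> g i = 1 - i" using Zplus_dom_tail[OF g] by blast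
  define K where "K = max N (2 - g (-1))"
  have dec: "strict_antimono_on {1..} g" using g by (simp add: Zplus_dom_iff)
  have "1 - K < g z \<and> g z \<le> max (g (- int m)) (g 1)" if "z \<in> idx m" "z < K" for z
  proof (cases "z < 0")
    case True
    then show ?thesis
      using that Zplus_dom_neg_bounds[OF g, of z] by (auto simp: K_def idx_def)
  next
    case False
    then have "z \<in> {1..}" using that by (auto simp: idx_def)
    then have "g K < g z" "g z \<le> g 1"
      using monotone_onD[OF dec, of z K] that N(1) Zplus_dom_le_first[OF g] by (auto simp: K_def)
    then show ?thesis using N(2)[of K] by (simp add: K_def)
  qed
  then have "bruhat_candidate m f K (max (g (- int m)) (g 1)) g"
    using g dom N(2)
    by (simp add: bruhat_candidate_def Zplus_dom_iff strict_antimono_iff_antimono K_def)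
  moreover have "1 \<le> K" using N(1) by (simp add: K_def)
  ultimately show "bruhat_ge m f g" using candidate_imp_bruhat_ge[OF f] by blast
qed (rule bruhat_ge_imp_dominates)

theorem lemma6p6:
  fixes m :: nat and f g :: "int \<Rightarrow> int"
  assumes "f \<in> Zplus_dom m" and "g \<in> Zplus_dom m"
  shows "bruhat_ge m f g \<longleftrightarrow> super_ge m (natural m f) (natural m g)"
  using assms
  by (simp add: bruhat_ge_iff_dominates super_ge_iff_dominates natural_Zsuper_dom
      super_dominates_natural_iff)

end
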